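(* Let $H=(V,E)$ be a finite simple graph, let $M$ be a maximum $2$-matching of $H$, and let $(v_0,\dots,v_{2i+2};x_0,x_2,\dots,x_{2i})$ be a B-alternating path saving an object $O_0$ of $M$. Define $$M'=\bigl(M\setminus\{v_{2j+1}v_{2j+2}:0\le j\le i\}\bigr)\cup\{x_{2j}v_{2j+1}:0\le j\le i\}.$$ Then $M'$ is a maximum $2$-matching of $H$. Moreover, the number of components of $(V,M')$ that are $0$-paths or $1$-paths is exactly one less than the corresponding number for $(V,M)$.
   Context: A $2$-matching of $H$ is a set $M\subseteq E$ in which every vertex is incident to at most two edges of $M$. It is maximum if $|M|$ is as large as possible. The components of $(V,M)$ are paths and cycles. A single vertex counts as a $0$-path, and a $k$-path has $k$ edges. An object of $M$ is the vertex set of a component of $(V,M)$ that is a $0$-path or a $1$-path. A B-alternating path saving the object $O_0$ consists of pairwise distinct vertices $v_0,v_1,\dots,v_{2i+2}$ (with $i\ge 0$), together with vertices $x_0,x_2,\dots,x_{2i}$, satisfying: (1) $v_0\in O_0$ and $x_0=v_0$. (2) For each $j=1,\dots,i$ there is a component $P_j$ of $(V,M)$ that is a path with $2$, $3$ or $4$ edges, and $P_1,\dots,P_i$ are pairwise distinct. The vertex $v_{2j-1}$ is an internal vertex of $P_j$, and it is the middle vertex of $P_j$ if $P_j$ has $4$ edges. The vertex $v_{2j}$ is a neighbour of $v_{2j-1}$ on $P_j$. Let $O_j$ be the vertex set of the component of $P_j$ minus the edge $v_{2j-1}v_{2j}$ that contains $v_{2j}$. Then $x_{2j}\in O_j$.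 (3) $x_{2j}v_{2j+1}\in E\setminus M$ for every $j=0,\dots,i$. (4) The vertex $v_{2i+1}$ lies on a component $Q$ of $(V,M)$ different from $P_1,\dots,P_i$. The component $Q$ is either a cycle, or a path with at least $5$ edges, or a path with exactly $4$ edges of which $v_{2i+1}$ is not the middle vertex. (5) $v_{2i+1}v_{2i+2}\in M$, and if $Q$ is a path then the component of $Q$ minus the edge $v_{2i+1}v_{2i+2}$ containing $v_{2i+2}$ has at least $3$ vertices. *)

theory Defs
  imports Main
begin

definition simple_graph :: "'a set \<Rightarrow> 'a set set \<Rightarrow> bool" where
  "simple_graph V E \<longleftrightarrow> finite V \<and> (\<forall>e\<in>E. \<exists>u w. u \<in> V \<and> w \<in> V \<and> u \<noteq> w \<and> e = {u, w})"

definition two_matching :: "'a set \<Rightarrow> 'a set set \<Rightarrow> 'a set set \<Rightarrow> bool" where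
  "two_matching V E M \<longleftrightarrow> M \<subseteq> E \<and> (\<forall>v\<in>V. card {e\<in>M. v \<in> e} \<le> 2)"

definition max_two_matching :: "'a set \<Rightarrow> 'a set set \<Rightarrow> 'a set set \<Rightarrow> bool" where
  "max_two_matching V E M \<longleftrightarrow> two_matching V E M \<and>
     (\<forall>M'. two_matching V E M' \<longrightarrow> card M' \<le> card M)"

definition comp :: "'a set set \<Rightarrow> 'a \<Rightarrow> 'a set" where
  "comp M v = {u. (\<lambda>a b. {a, b} \<in> M)\<^sup>*\<^sup>* v u}"

definition comps :: "'a set \<Rightarrow> 'a set set \<Rightarrow> 'a set set" where
  "comps V M = comp M ` V"

definition comp_edges :: "'a set set \<Rightarrow> 'a set \<Rightarrow> 'a set set" where
  "comp_edges M C = {e \<in> M. e \<subseteq> C}"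

definition path_seq :: "'a set set \<Rightarrow> 'a set \<Rightarrow> 'a list \<Rightarrow> bool" where
  "path_seq M C ps \<longleftrightarrow> ps \<noteq> [] \<and> distinct ps \<and> set ps = C \<and>
     comp_edges M C = {{ps ! j, ps ! Suc j} | j. Suc j < length ps}"

definition is_k_path :: "'a set set \<Rightarrow> 'a set \<Rightarrow> nat \<Rightarrow> bool" where
  "is_k_path M C k \<longleftrightarrow> (\<exists>ps. path_seq M C ps \<and> length ps = k + 1)"

definition is_path :: "'a set set \<Rightarrow> 'a set \<Rightarrow> bool" where
  "is_path M C \<longleftrightarrow> (\<exists>k. is_k_path M C k)"

definition is_cycle :: "'a set set \<Rightarrow> 'a set \<Rightarrow> bool" where
  "is_cycle M C \<longleftrightarrow> (\<exists>ps. distinct ps \<and> length ps \<ge> 3 \<and> set ps = C \<and>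
     comp_edges M C = {{ps ! j, ps ! ((j + 1) mod length ps)} | j. j < length ps})"

definition internal_vertex :: "'a set set \<Rightarrow> 'a set \<Rightarrow> 'a \<Rightarrow> bool" where
  "internal_vertex M C w \<longleftrightarrow>
     (\<exists>ps l. path_seq M C ps \<and> 0 < l \<and> Suc l < length ps \<and> w = ps ! l)"

definition middle_vertex :: "'a set set \<Rightarrow> 'a set \<Rightarrow> 'a \<Rightarrow> bool" where
  "middle_vertex M C w \<longleftrightarrow> (\<exists>ps. path_seq M C ps \<and> length ps = 5 \<and> w = ps ! 2)"

definition objects :: "'a set \<Rightarrow> 'a set set \<Rightarrow> 'a set set" where
  "objects V M = {C \<in> comps V M. is_k_path M C 0 \<or> is_k_path M C 1}"

(* B-alternating path (v_0..v_{2i+2}; x_0,x_2,..,x_{2i}) saving the object O0.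
   P_j is the component of v_{2j-1}, Q the component of v_{2i+1}. *)
definition B_alternating_path ::
  "'a set \<Rightarrow> 'a set set \<Rightarrow> 'a set set \<Rightarrow> 'a set \<Rightarrow> nat \<Rightarrow> (nat \<Rightarrow> 'a) \<Rightarrow> (nat \<Rightarrow> 'a) \<Rightarrow> bool" where
  "B_alternating_path V E M O0 i v x \<longleftrightarrow>
     (\<forall>k\<le>2*i+2. v k \<in> V) \<and> inj_on v {0..2*i+2} \<and>
     (\<forall>j\<le>i. x (2*j) \<in> V) \<and>
     \<comment> \<open>(1)\<close>
     O0 \<in> objects V M \<and> v 0 \<in> O0 \<and> x 0 = v 0 \<and>
     \<comment> \<open>(2)\<close>
     inj_on (\<lambda>j. comp M (v (2*j - 1))) {1..i} \<and>
     (\<forall>j\<in>{1..i}.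
        (is_k_path M (comp M (v (2*j - 1))) 2 \<or> is_k_path M (comp M (v (2*j - 1))) 3 \<or>
         is_k_path M (comp M (v (2*j - 1))) 4) \<and>
        internal_vertex M (comp M (v (2*j - 1))) (v (2*j - 1)) \<and>
        (is_k_path M (comp M (v (2*j - 1))) 4 \<longrightarrow>
           middle_vertex M (comp M (v (2*j - 1))) (v (2*j - 1))) \<and>
        {v (2*j - 1), v (2*j)} \<in> M \<and>
        x (2*j) \<in> comp (M - {{v (2*j - 1), v (2*j)}}) (v (2*j))) \<and>
     \<comment> \<open>(3)\<close>
     (\<forall>j\<le>i. {x (2*j), v (2*j + 1)} \<in> E - M) \<and>
     \<comment> \<open>(4)\<close>
     comp M (v (2*i + 1)) \<notin> (\<lambda>j. comp M (v (2*j - 1))) ` {1..i} \<and>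
     (is_cycle M (comp M (v (2*i + 1))) \<or>
      (\<exists>k\<ge>5. is_k_path M (comp M (v (2*i + 1))) k) \<or>
      (is_k_path M (comp M (v (2*i + 1))) 4 \<and>
         \<not> middle_vertex M (comp M (v (2*i + 1))) (v (2*i + 1)))) \<and>
     \<comment> \<open>(5)\<close>
     {v (2*i + 1), v (2*i + 2)} \<in> M \<and>
     (is_path M (comp M (v (2*i + 1))) \<longrightarrow>
        card (comp (M - {{v (2*i + 1), v (2*i + 2)}}) (v (2*i + 2))) \<ge> 3)"

end

theory Submission
  imports Defs
begin

text \<open>Trading the edges v(2j+1)v(2j+2) for the non-edges x(2j)v(2j+1) keeps the size of M,
  because all vertices involved are distinct: x(2j) lies in O0 or in the part O(j) of P(j) cut
  off by the edge v(2j-1)v(2j), and O0, the P(j) and Q are distinct components. Degrees stay at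
  most two: v(2j+1) trades one edge for another, and x(2j) has degree at most one inside its
  part of at most two vertices.

  Every touched vertex ends up in a component of M' with at least three vertices: x(2j),
  v(2j+1) and a second M-neighbour of v(2j+1) (which exists for j = i by maximality of M);
  v(2j+2) joins the component of x(2j+2); and v(2i+2) keeps three vertices by condition (5) or
  because Q is a cycle. In M the touched vertices lie in O0 or in components with at least
  three vertices. Components avoiding the touched vertices are the same for M and M', so
  exactly O0 stops being an object.\<close>

section \<open>Edge sets and their components\<close>

abbreviation incident :: "'a set set \<Rightarrow> 'a \<Rightarrow> 'a set set" where
  "incident N w \<equiv> {e \<in> N. w \<in> e}"

definition loopless :: "'a set set \<Rightarrow> bool" where
  "loopless N \<longleftrightarrow> (\<forall>e\<in>N. \<exists>a b. a \<noteq> b \<and> e = {a, b})"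

lemma loopless_subset: "loopless N \<Longrightarrow> F \<subseteq> N \<Longrightarrow> loopless F"
  unfolding loopless_def by blast

lemma loopless_edge_ne: "loopless N \<Longrightarrow> {a, b} \<in> N \<Longrightarrow> a \<noteq> b"
  unfolding loopless_def by (metis doubleton_eq_iff)

lemma loopless_edge_at:
  assumes "loopless N" "e \<in> N" "w \<in> e"
  obtains u where "e = {w, u}" "u \<noteq> w"
proof -
  obtain a b where "a \<noteq> b" "e = {a, b}"
    using assms(1,2) unfolding loopless_def by blast
  then show thesis
    using that assms(3) by (metis doubleton_eq_iff insertE singletonD)
qed

lemma simple_graph_loopless: "simple_graph V E \<Longrightarrow> loopless E"
  unfolding simple_graph_def loopless_def by blast

lemma simple_graph_Union_subset: "simple_graph V E \<Longrightarrow> \<Union>E \<subseteq> V"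
  unfolding simple_graph_def by force

lemma self_in_comp: "z \<in> comp N z"
  by (simp add: comp_def)

lemma comp_edge_closed: "a \<in> comp N z \<Longrightarrow> {a, b} \<in> N \<Longrightarrow> b \<in> comp N z"
  unfolding comp_def by (auto intro: rtranclp.rtrancl_into_rtrancl)

lemma comp_sym: "u \<in> comp N z \<Longrightarrow> z \<in> comp N u"
proof -
  have "symp (\<lambda>a b. {a, b} \<in> N)" by (auto simp: symp_def insert_commute)
  then show "u \<in> comp N z \<Longrightarrow> z \<in> comp N u"
    unfolding comp_def using sympD[OF symp_rtranclp] by fastforce
qed

lemma comp_trans: "u \<in> comp N z \<Longrightarrow> w \<in> comp N u \<Longrightarrow> w \<in> comp N z"
  unfolding comp_def by auto

lemma comp_eq_if_mem: "u \<in> comp N z \<Longrightarrow> comp N u = comp N z"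
  by (meson comp_sym comp_trans subsetI subset_antisym)

lemma comp_mono_on:
  assumes "\<And>a b. a \<in> S \<Longrightarrow> {a, b} \<in> N \<Longrightarrow> b \<in> S \<and> {a, b} \<in> N'" and "z \<in> S"
  shows "comp N z \<subseteq> S \<inter> comp N' z"
proof
  fix u assume "u \<in> comp N z"
  then have "(\<lambda>a b. {a, b} \<in> N)\<^sup>*\<^sup>* z u" by (simp add: comp_def)
  then have "u \<in> S \<and> u \<in> comp N' z"
  proof (induction rule: rtranclp_induct)
    case base then show ?case using assms(2) self_in_comp by metis
  next
    case (step y w) then show ?case using assms(1) comp_edge_closed by metis
  qed
  then show "u \<in> S \<inter> comp N' z" by simp
qed

lemma comp_subset_if_closed:
  "(\<And>a b. a \<in> S \<Longrightarrow> {a, b} \<in> N \<Longrightarrow> b \<in> S) \<Longrightarrow> z \<in> S \<Longrightarrow> comp N z \<subseteq> S"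
  using comp_mono_on[of S N N z] by blast

lemma comp_mono: "N \<subseteq> N' \<Longrightarrow> comp N z \<subseteq> comp N' z"
  using comp_mono_on[of UNIV N N' z] by blast

lemma comp_subset_insert_Union: "comp N z \<subseteq> insert z (\<Union>N)"
  by (rule comp_subset_if_closed) auto

lemma finite_comp: "finite (\<Union>N) \<Longrightarrow> finite (comp N z)"
  by (meson comp_subset_insert_Union finite_insert finite_subset)

lemma comp_eq_if_agree:
  assumes "\<And>e. e \<notin> X \<Longrightarrow> e \<in> N \<longleftrightarrow> e \<in> N'" and "comp N z \<inter> \<Union>X = {}"
  shows "comp N' z = comp N z"
proof
  have agree: "{a, b} \<in> N \<longleftrightarrow> {a, b} \<in> N'" if "a \<in> comp N z" for a b
    using assms that by blast
  have "comp N z \<subseteq> comp N z \<inter> comp N' z"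
    by (rule comp_mono_on) (metis agree comp_edge_closed, rule self_in_comp)
  then show "comp N z \<subseteq> comp N' z"
    by blast
  show "comp N' z \<subseteq> comp N z"
    by (rule comp_subset_if_closed) (metis agree comp_edge_closed, rule self_in_comp)
qed

lemma card_incident_le_1_if_small_comp:
  assumes "loopless N" "finite (comp N a)" "card (comp N a) \<le> 2"
  shows "card (incident N a) \<le> 1"
proof -
  have sub: "incident N a \<subseteq> (\<lambda>b. {a, b}) ` (comp N a - {a})"
  proof
    fix e assume e: "e \<in> incident N a"
    obtain b where b: "e = {a, b}" "b \<noteq> a"
      using loopless_edge_at[OF assms(1)] e by blast
    then have "b \<in> comp N a"
      using e comp_edge_closed[OF self_in_comp] by simp
    then show "e \<in> (\<lambda>b. {a, b}) ` (comp N a - {a})"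
      using b by blast
  qed
  have "card (incident N a) \<le> card ((\<lambda>b. {a, b}) ` (comp N a - {a}))"
    using assms(2) sub by (intro card_mono) auto
  also have "\<dots> \<le> card (comp N a - {a})"
    by (rule card_image_le) (use assms(2) in simp)
  also have "\<dots> \<le> 1"
    using assms(2,3) self_in_comp[of a N] by simp
  finally show ?thesis .
qed

lemma three_le_card:
  "finite S \<Longrightarrow> {a, b, c} \<subseteq> S \<Longrightarrow> a \<noteq> b \<Longrightarrow> b \<noteq> c \<Longrightarrow> a \<noteq> c \<Longrightarrow> 3 \<le> card S"
proof -
  assume "finite S" "{a, b, c} \<subseteq> S" "a \<noteq> b" "b \<noteq> c" "a \<noteq> c"
  then have "card {a, b, c} \<le> card S" by (intro card_mono)
  then show ?thesis using \<open>a \<noteq> b\<close> \<open>b \<noteq> c\<close> \<open>a \<noteq> c\<close> by simp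
qed

lemma card_le_2_exchange:
  assumes "finite X" "b \<in> X" "card X \<le> 2" "Y \<subseteq> insert a (X - {b})"
  shows "card Y \<le> 2"
proof -
  have "card Y \<le> card (insert a (X - {b}))"
    using assms(1,4) by (intro card_mono) auto
  also have "\<dots> \<le> Suc (card (X - {b}))"
    using assms(1) by (simp add: card_insert_if)
  finally show ?thesis
    using assms(1-3) by simp
qed

section \<open>Paths and cycles\<close>

lemma card_if_path_seq: "path_seq N C ps \<Longrightarrow> card C = length ps"
  unfolding path_seq_def using distinct_card by metis

lemma card_if_k_path: "is_k_path N C k \<Longrightarrow> card C = Suc k"
  unfolding is_k_path_def using card_if_path_seq by fastforce

lemma card_if_cycle: "is_cycle N C \<Longrightarrow> 3 \<le> card C"
  unfolding is_cycle_def using distinct_card by metis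

lemma path_seq_edge: "path_seq N C ps \<Longrightarrow> Suc j < length ps \<Longrightarrow> {ps ! j, ps ! Suc j} \<in> N"
  unfolding path_seq_def comp_edges_def by blast

lemma path_seq_neighbour:
  assumes "path_seq N C ps" "C = comp N z" "p < length ps" "{ps ! p, b} \<in> N"
  obtains q where "q < length ps" "b = ps ! q" "q = Suc p \<or> p = Suc q"
proof -
  have "ps ! p \<in> C"
    using assms(1,3) unfolding path_seq_def by (metis nth_mem)
  then have "{ps ! p, b} \<in> comp_edges N C"
    using assms comp_edge_closed unfolding comp_edges_def by auto
  then obtain m where m: "{ps ! p, b} = {ps ! m, ps ! Suc m}" "Suc m < length ps"
    using assms(1) unfolding path_seq_def by auto
  have "distinct ps"
    using assms(1) unfolding path_seq_def by blast
  then have "ps ! p = ps ! m \<longleftrightarrow> p = m" "ps ! p = ps ! Suc m \<longleftrightarrow> p = Suc m"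
    using assms(3) m(2) nth_eq_iff_index_eq Suc_lessD by metis+
  then show thesis
    using m that[of "Suc m"] that[of m] by (auto simp: doubleton_eq_iff)
qed

lemma comp_remove_path_edge:
  assumes "path_seq N C ps" "C = comp N z" "Suc q < length ps" "p < length ps"
  shows "comp (N - {{ps ! q, ps ! Suc q}}) (ps ! p)
           \<subseteq> (!) ps ` {r. r < length ps \<and> (r \<le> q \<longleftrightarrow> p \<le> q)}"
proof (rule comp_subset_if_closed)
  fix a b
  assume a: "a \<in> (!) ps ` {r. r < length ps \<and> (r \<le> q \<longleftrightarrow> p \<le> q)}"
    and ab: "{a, b} \<in> N - {{ps ! q, ps ! Suc q}}"
  then obtain r where r: "r < length ps" "a = ps ! r" "r \<le> q \<longleftrightarrow> p \<le> q"
    by blast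
  obtain s where s: "s < length ps" "b = ps ! s" "s = Suc r \<or> r = Suc s"
    using path_seq_neighbour[OF assms(1,2) r(1)] ab r(2) by blast
  have "s \<le> q \<longleftrightarrow> r \<le> q"
  proof (rule ccontr)
    assume "\<not> (s \<le> q \<longleftrightarrow> r \<le> q)"
    then have "(r = q \<and> s = Suc q) \<or> (s = q \<and> r = Suc q)"
      using s(3) by auto
    then have "{a, b} = {ps ! q, ps ! Suc q}"
      using r(2) s(2) by auto
    then show False
      using ab by blast
  qed
  then show "b \<in> (!) ps ` {r. r < length ps \<and> (r \<le> q \<longleftrightarrow> p \<le> q)}"
    using r(3) s(1,2) by blast
qed (use assms(4) in blast)

lemma short_path_position:
  assumes "is_k_path N C 2 \<or> is_k_path N C 3 \<or> is_k_path N C 4"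
    and "is_k_path N C 4 \<longrightarrow> middle_vertex N C w" and "internal_vertex N C w"
  obtains ps l where "path_seq N C ps" "0 < l" "Suc l < length ps" "w = ps ! l"
    "length ps \<le> 5" "length ps = 5 \<longrightarrow> l = 2"
proof (cases "is_k_path N C 4")
  case True
  then obtain ps where "path_seq N C ps" "length ps = 5" "w = ps ! 2"
    using assms(2) unfolding middle_vertex_def by blast
  then show thesis
    using that[of ps 2] by simp
next
  case False
  obtain ps l where ps: "path_seq N C ps" "0 < l" "Suc l < length ps" "w = ps ! l"
    using assms(3) unfolding internal_vertex_def by blast
  have "length ps \<le> 4"
    using False assms(1) card_if_k_path card_if_path_seq[OF ps(1)] by fastforce
  then show thesis
    using that[OF ps] by simp
qed

lemma short_path_side:
  assumes "is_k_path N C 2 \<or> is_k_path N C 3 \<or> is_k_path N C 4"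
    and "is_k_path N C 4 \<longrightarrow> middle_vertex N C w"
    and "internal_vertex N C w" "C = comp N z" "{w, y} \<in> N"
  shows "w \<notin> comp (N - {{w, y}}) y \<and> card (comp (N - {{w, y}}) y) \<le> 2"
proof -
  obtain ps l where ps: "path_seq N C ps" "0 < l" "Suc l < length ps" "w = ps ! l"
    and short: "length ps \<le> 5" "length ps = 5 \<longrightarrow> l = 2"
    using short_path_position[OF assms(1-3)] by blast
  let ?n = "length ps"
  have w_idx: "ps ! r \<noteq> w" if "r < ?n" "r \<noteq> l" for r
    using ps that nth_eq_iff_index_eq unfolding path_seq_def by fastforce
  obtain q where q: "q < ?n" "y = ps ! q" "q = Suc l \<or> l = Suc q"
    using path_seq_neighbour[OF ps(1) assms(4) _ ] ps(3,4) assms(5) by (metis Suc_lessD)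
  obtain I where I: "finite I" "comp (N - {{w, y}}) y \<subseteq> (!) ps ` I" "l \<notin> I"
      "I \<subseteq> {..<?n}" "card I \<le> 2"
  proof -
    consider (right) "q = Suc l" | (left) "l = Suc q"
      using q(3) by blast
    then show thesis
    proof cases
      case right
      have side: "comp (N - {{w, y}}) y \<subseteq> (!) ps ` {Suc l..<?n}"
        using comp_remove_path_edge[OF ps(1) assms(4) ps(3) q(1)] ps(4) q(2) right
        by (auto simp: atLeastLessThan_def)
      show thesis
        by (rule that[OF _ side]) (use ps(2) short in auto)
    next
      case left
      have "{w, y} = {ps ! q, ps ! Suc q}" "Suc q < ?n"
        using ps(3,4) q(2) left by auto
      then have "comp (N - {{w, y}}) y
          \<subseteq> (!) ps ` {r. r < ?n \<and> (r \<le> q \<longleftrightarrow> q \<le> q)}"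
        using comp_remove_path_edge[OF ps(1) assms(4) _ q(1)] q(2) by metis
      then have side: "comp (N - {{w, y}}) y \<subseteq> (!) ps ` {..q}"
        by auto
      show thesis
        by (rule that[OF _ side]) (use ps(3) short left in auto)
    qed
  qed
  have "w \<notin> (!) ps ` I"
  proof
    assume "w \<in> (!) ps ` I"
    then obtain r where "r \<in> I" "w = ps ! r"
      by blast
    then show False
      using w_idx[of r] I(3,4) by auto
  qed
  then show ?thesis
    using I(2,5) card_mono[OF finite_imageI[OF I(1)] I(2)] card_image_le[OF I(1), of "(!) ps"]
    by auto
qed

lemma internal_vertex_two_neighbours:
  assumes "internal_vertex N C w"
  obtains a b where "a \<noteq> b" "{w, a} \<in> N" "{w, b} \<in> N"
proof -
  obtain ps l where ps: "path_seq N C ps" "0 < l" "Suc l < length ps" "w = ps ! l"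
    using assms unfolding internal_vertex_def by blast
  have "ps ! (l - 1) \<noteq> ps ! Suc l"
    using ps nth_eq_iff_index_eq unfolding path_seq_def by fastforce
  moreover have "{ps ! (l - 1), ps ! l} \<in> N"
    using path_seq_edge[OF ps(1), of "l - 1"] ps(2,3) by simp
  ultimately show thesis
    using that path_seq_edge[OF ps(1,3)] ps(4) by (metis insert_commute)
qed

lemma cycle_vertex_two_neighbours:
  assumes "is_cycle N C" "w \<in> C"
  obtains a b where "a \<noteq> b" "{w, a} \<in> N" "{w, b} \<in> N"
proof -
  obtain ps where ps: "distinct ps" "3 \<le> length ps" "set ps = C"
    "comp_edges N C = {{ps ! j, ps ! ((j + 1) mod length ps)} | j. j < length ps}"
    using assms(1) unfolding is_cycle_def by blast
  let ?n = "length ps"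
  have edge: "{ps ! j, ps ! ((j + 1) mod ?n)} \<in> N" if "j < ?n" for j
  proof -
    have "{ps ! j, ps ! ((j + 1) mod ?n)} \<in> comp_edges N C"
      unfolding ps(4) using that by blast
    then show ?thesis
      by (simp add: comp_edges_def)
  qed
  obtain l where l: "l < ?n" "w = ps ! l"
    using assms(2) ps(3) by (auto simp: in_set_conv_nth)
  define p where "p = (if l = 0 then ?n - 1 else l - 1)"
  define r where "r = (if Suc l = ?n then 0 else Suc l)"
  have "ps \<noteq> []"
    using ps(2) by auto
  then have p: "p < ?n" "(p + 1) mod ?n = l"
    using l(1) ps(2) by (cases "l = 0"; simp add: p_def)+
  have r: "(l + 1) mod ?n = r" "r < ?n"
    using l(1) ps(2) \<open>ps \<noteq> []\<close> by (cases "Suc l = ?n"; simp add: r_def)+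
  have "r \<noteq> p"
    using l(1) ps(2) unfolding p_def r_def by (cases "l = 0"; cases "Suc l = ?n") simp_all
  then have "ps ! r \<noteq> ps ! p"
    using nth_eq_iff_index_eq[OF ps(1) r(2) p(1)] by simp
  moreover have "{w, ps ! r} \<in> N"
    using edge[OF l(1)] l(2) r(1) by simp
  moreover have "{w, ps ! p} \<in> N"
    using edge[OF p(1)] l(2) p(2) by (simp add: insert_commute)
  ultimately show thesis
    by (rule that)
qed

lemma k_path_0_or_1_iff_card_le_2:
  assumes "loopless N" "C = comp N w" "finite C"
  shows "is_k_path N C 0 \<or> is_k_path N C 1 \<longleftrightarrow> card C \<le> 2"
proof
  assume "is_k_path N C 0 \<or> is_k_path N C 1"
  then show "card C \<le> 2"
    using card_if_k_path by fastforce
next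
  assume card: "card C \<le> 2"
  have w: "w \<in> C"
    using assms(2) self_in_comp by metis
  show "is_k_path N C 0 \<or> is_k_path N C 1"
  proof (cases "C = {w}")
    case True
    then have "comp_edges N C = {}"
      using assms(1) unfolding comp_edges_def loopless_def by fastforce
    then have "path_seq N C [w]"
      using True by (simp add: path_seq_def)
    then show ?thesis
      unfolding is_k_path_def by force
  next
    case False
    then obtain u where u: "u \<in> C" "u \<noteq> w"
      using w by blast
    have C: "C = {w, u}"
      using card assms(3) u w by (metis card_2_iff card_seteq empty_subsetI insert_subset)
    have "(\<lambda>a b. {a, b} \<in> N)\<^sup>*\<^sup>* w u"
      using u assms(2) by (simp add: comp_def)
    then obtain a where a: "{w, a} \<in> N"
      using u(2) by (cases rule: converse_rtranclpE) auto
    have "a \<in> C" "a \<noteq> w"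
      using a assms(1,2) self_in_comp comp_edge_closed loopless_edge_ne by metis+
    then have wu: "{w, u} \<in> N"
      using a C by auto
    have "comp_edges N C = {{w, u}}"
      using wu C assms(1) u(2) unfolding comp_edges_def loopless_def by auto
    moreover have "{{[w, u] ! j, [w, u] ! Suc j} | j. Suc j < length [w, u]} = {{w, u}}"
      by auto
    ultimately have "path_seq N C [w, u]"
      using C u by (auto simp: path_seq_def)
    then show ?thesis
      unfolding is_k_path_def by force
  qed
qed

lemma objects_eq_small_comps:
  assumes "simple_graph V E" "N \<subseteq> E"
  shows "objects V N = {C \<in> comps V N. card C \<le> 2}"
proof -
  have "finite (\<Union>N)"
    using assms simple_graph_Union_subset unfolding simple_graph_def
    by (meson Union_mono finite_subset)
  then have "is_k_path N (comp N w) 0 \<or> is_k_path N (comp N w) 1 \<longleftrightarrow> card (comp N w) \<le> 2"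
    for w
    using k_path_0_or_1_iff_card_le_2 simple_graph_loopless[OF assms(1)] loopless_subset assms(2)
      finite_comp by metis
  then show ?thesis
    unfolding objects_def comps_def by auto
qed

section \<open>Switching along a B-alternating path\<close>

locale B_alternating_switch =
  fixes V :: "'a set" and E M :: "'a set set" and O0 :: "'a set"
    and i :: nat and v x :: "nat \<Rightarrow> 'a"
  assumes graph: "simple_graph V E"
    and maximum: "max_two_matching V E M"
    and alt_path: "B_alternating_path V E M O0 i v x"
begin

definition removed :: "nat \<Rightarrow> 'a set" where
  "removed j = {v (2*j + 1), v (2*j + 2)}"

definition added :: "nat \<Rightarrow> 'a set" where
  "added j = {x (2*j), v (2*j + 1)}"

definition Removed :: "'a set set" where
  "Removed = removed ` {..i}"

definition Added :: "'a set set" where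
  "Added = added ` {..i}"

definition switched :: "'a set set" where
  "switched = (M - Removed) \<union> Added"

text \<open>\<open>P j\<close> is the paper's P(j+1) for \<open>j < i\<close>, and \<open>P i\<close> is Q.\<close>
definition P :: "nat \<Rightarrow> 'a set" where
  "P j = comp M (v (2*j + 1))"

text \<open>For \<open>k \<le> i\<close>, \<open>host k\<close> is the component of M containing x(2k); \<open>host (Suc i)\<close> is Q.\<close>
definition host :: "nat \<Rightarrow> 'a set" where
  "host k = (if k = 0 then O0 else P (k - 1))"

definition piece :: "nat \<Rightarrow> 'a set" where
  "piece k = comp (M - Removed) (x (2*k))"

definition Touched :: "'a set" where
  "Touched = \<Union>(Removed \<union> Added)"

lemma finite_V: "finite V"
  using graph unfolding simple_graph_def by blast

lemma M_subset_E: "M \<subseteq> E"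
  using maximum unfolding max_two_matching_def two_matching_def by blast

lemma card_incident_M: "w \<in> V \<Longrightarrow> card (incident M w) \<le> 2"
  using maximum unfolding max_two_matching_def two_matching_def by blast

lemma loopless_M: "loopless M"
  using simple_graph_loopless[OF graph] loopless_subset M_subset_E by blast

lemma finite_comp_of_subgraph: "N \<subseteq> E \<Longrightarrow> finite (comp N z)"
  using simple_graph_Union_subset[OF graph] finite_V finite_comp
  by (meson Union_mono finite_subset order_trans)

lemma finite_M: "finite M"
proof -
  have "M \<subseteq> Pow V"
    using M_subset_E simple_graph_Union_subset[OF graph] by blast
  then show ?thesis
    using finite_V finite_subset by blast
qed

lemma
  shows v_eq_iff: "k \<le> 2*i + 2 \<Longrightarrow> k' \<le> 2*i + 2 \<Longrightarrow> v k = v k' \<longleftrightarrow> k = k'"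
    and O0_object: "O0 \<in> objects V M"
    and v0_in_O0: "v 0 \<in> O0"
    and x0_eq: "x 0 = v 0"
    and added_in_E_minus_M: "j \<le> i \<Longrightarrow> added j \<in> E - M"
    and Q_shape: "is_cycle M (P i) \<or> (\<exists>k\<ge>5. is_k_path M (P i) k)
                   \<or> (is_k_path M (P i) 4 \<and> \<not> middle_vertex M (P i) (v (2*i + 1)))"
    and removed_last_in_M: "removed i \<in> M"
    and Q_side_if_path: "is_path M (P i) \<Longrightarrow> 3 \<le> card (comp (M - {removed i}) (v (2*i + 2)))"
  using alt_path unfolding B_alternating_path_def inj_on_def P_def added_def removed_def
  by auto

lemma
  assumes "j < i"
  shows P_short_path: "is_k_path M (P j) 2 \<or> is_k_path M (P j) 3 \<or> is_k_path M (P j) 4"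
    and v_odd_internal: "internal_vertex M (P j) (v (2*j + 1))"
    and v_odd_middle: "is_k_path M (P j) 4 \<longrightarrow> middle_vertex M (P j) (v (2*j + 1))"
    and removed_short_in_M: "removed j \<in> M"
    and x_in_side: "x (2*j + 2) \<in> comp (M - {removed j}) (v (2*j + 2))"
  using alt_path assms unfolding B_alternating_path_def P_def removed_def
  by (auto dest!: bspec[where x = "Suc j"])

lemma P_eq_iff:
  assumes "j \<le> i" "k \<le> i"
  shows "P j = P k \<longleftrightarrow> j = k"
proof
  let ?f = "\<lambda>j. comp M (v (2*j - 1))"
  have f: "?f (Suc j) = P j" for j
    by (simp add: P_def)
  have inj: "inj_on ?f {1..i}" and last: "P i \<notin> ?f ` {1..i}"
    using alt_path unfolding B_alternating_path_def P_def by blast+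
  have P_ne_last: "P j \<noteq> P i" if "j < i" for j
  proof -
    have "Suc j \<in> {1..i}"
      using that by simp
    then have "?f (Suc j) \<in> ?f ` {1..i}"
      by (rule imageI)
    then show ?thesis
      using f[of j] last by auto
  qed
  assume "P j = P k"
  show "j = k"
  proof (cases "j = i \<or> k = i")
    case True
    then show ?thesis
      using P_ne_last assms \<open>P j = P k\<close> by (metis le_neq_implies_less)
  next
    case False
    then have "Suc j \<in> {1..i}" "Suc k \<in> {1..i}"
      using assms by auto
    then show ?thesis
      using inj_onD[OF inj] f \<open>P j = P k\<close> by (metis Suc_inject)
  qed
qed simp

lemma v_odd_in_P: "v (2*j + 1) \<in> P j"
  unfolding P_def by (rule self_in_comp)

lemma removed_in_M: "j \<le> i \<Longrightarrow> removed j \<in> M"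
  using removed_short_in_M removed_last_in_M by (cases "j = i") auto

lemma v_even_in_P: "j \<le> i \<Longrightarrow> v (2*j + 2) \<in> P j"
  using removed_in_M v_odd_in_P comp_edge_closed unfolding removed_def P_def by metis

lemma card_P: "j \<le> i \<Longrightarrow> 3 \<le> card (P j)"
proof (cases "j = i")
  case True
  then show ?thesis
    using Q_shape card_if_cycle card_if_k_path by fastforce
next
  case False
  assume "j \<le> i"
  then show ?thesis
    using False P_short_path[of j] card_if_k_path by fastforce
qed

lemma
  shows comp_v0_eq_O0: "comp M (v 0) = O0" and card_O0: "card O0 \<le> 2"
    and finite_O0: "finite O0"
proof -
  obtain w where "w \<in> V" "O0 = comp M w" "is_k_path M O0 0 \<or> is_k_path M O0 1"
    using O0_object unfolding objects_def comps_def by blast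
  then show "comp M (v 0) = O0" "card O0 \<le> 2" "finite O0"
    using v0_in_O0 comp_eq_if_mem card_if_k_path finite_comp_of_subgraph[OF M_subset_E]
    by (metis, fastforce, metis)
qed

lemma host_0 [simp]: "host 0 = O0" and host_Suc [simp]: "host (Suc j) = P j"
  by (simp_all add: host_def)

lemma host_is_comp:
  assumes "u \<in> host k"
  shows "comp M u = host k"
proof (cases "k = 0")
  case True
  then show ?thesis
    using assms comp_v0_eq_O0 comp_eq_if_mem by (metis host_0)
next
  case False
  then have "host k = comp M (v (2*(k - 1) + 1))"
    by (simp add: host_def P_def)
  then show ?thesis
    using assms comp_eq_if_mem by metis
qed

lemma host_unique:
  assumes "k \<le> Suc i" "k' \<le> Suc i" "u \<in> host k" "u \<in> host k'"
  shows "k = k'"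
proof -
  have eq: "host k = host k'"
    using host_is_comp assms(3,4) by metis
  have small: "card (host l) \<le> 2 \<longleftrightarrow> l = 0" if "l \<le> Suc i" for l
    using that card_O0 card_P by (cases l) fastforce+
  then have "k = 0 \<longleftrightarrow> k' = 0"
    using eq assms(1,2) by metis
  then show ?thesis
    using eq P_eq_iff assms(1,2) by (cases k; cases k') auto
qed

lemma
  assumes "j < i"
  shows v_odd_notin_side: "v (2*j + 1) \<notin> comp (M - {removed j}) (v (2*j + 2))"
    and card_side: "card (comp (M - {removed j}) (v (2*j + 2))) \<le> 2"
    and side_subset_P: "comp (M - {removed j}) (v (2*j + 2)) \<subseteq> P j"
proof -
  have "removed j \<in> M"
    using assms removed_in_M by simp
  then show "v (2*j + 1) \<notin> comp (M - {removed j}) (v (2*j + 2))"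
    and "card (comp (M - {removed j}) (v (2*j + 2))) \<le> 2"
    using short_path_side[OF P_short_path[OF assms] v_odd_middle[OF assms]
        v_odd_internal[OF assms] P_def]
    unfolding removed_def by blast+
  have "v (2*j + 2) \<in> P j"
    using assms v_even_in_P by simp
  then have "comp M (v (2*j + 2)) = P j"
    using comp_eq_if_mem unfolding P_def by metis
  then show "comp (M - {removed j}) (v (2*j + 2)) \<subseteq> P j"
    using comp_mono[of "M - {removed j}" M "v (2*j + 2)"] by blast
qed

lemma x_in_piece: "x (2*k) \<in> piece k"
  unfolding piece_def by (rule self_in_comp)

lemma piece_subset_side:
  assumes "j < i"
  shows "piece (Suc j) \<subseteq> comp (M - {removed j}) (v (2*j + 2))"
proof -
  have "removed j \<in> Removed"
    using assms unfolding Removed_def by simp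
  then have "M - Removed \<subseteq> M - {removed j}"
    by blast
  then have "piece (Suc j) \<subseteq> comp (M - {removed j}) (x (2*j + 2))"
    unfolding piece_def using comp_mono by simp
  also have "\<dots> = comp (M - {removed j}) (v (2*j + 2))"
    using comp_eq_if_mem[OF x_in_side[OF assms]] by simp
  finally show ?thesis .
qed

lemma piece_subset_host: "k \<le> i \<Longrightarrow> piece k \<subseteq> host k"
proof (cases k)
  case 0
  have "piece 0 \<subseteq> comp M (v 0)"
    unfolding piece_def using comp_mono[of "M - Removed" M] x0_eq by simp
  then show ?thesis
    using 0 comp_v0_eq_O0 by simp
next
  case (Suc j)
  assume "k \<le> i"
  then have "j < i"
    using Suc by simp
  then show ?thesis
    using piece_subset_side side_subset_P Suc by fastforce
qed

lemma card_piece: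
  assumes "k \<le> i"
  shows "finite (piece k) \<and> card (piece k) \<le> 2"
proof -
  obtain S where S: "piece k \<subseteq> S" "finite S" "card S \<le> 2"
  proof (cases k)
    case 0
    then show thesis
      using that[of O0] piece_subset_host[OF assms] card_O0 finite_O0 by simp
  next
    case (Suc j)
    then have "j < i"
      using assms by simp
    have "piece k \<subseteq> comp (M - {removed j}) (v (2*j + 2))"
      using piece_subset_side[OF \<open>j < i\<close>] Suc by simp
    moreover have "finite (comp (M - {removed j}) (v (2*j + 2)))"
      using M_subset_E by (intro finite_comp_of_subgraph) auto
    ultimately show thesis
      using that card_side[OF \<open>j < i\<close>] by blast
  qed
  then show ?thesis
    using finite_subset[OF S(1,2)] card_mono[OF S(2,1)] by simp
qed

lemma x_in_host: "k \<le> i \<Longrightarrow> x (2*k) \<in> host k"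
  using piece_subset_host x_in_piece by blast

lemma v_odd_notin_piece:
  assumes "j \<le> i" "k \<le> i"
  shows "v (2*j + 1) \<notin> piece k"
proof
  assume in_piece: "v (2*j + 1) \<in> piece k"
  then have "v (2*j + 1) \<in> host k"
    using piece_subset_host[OF assms(2)] by blast
  then have "k = Suc j"
    using host_unique[of k "Suc j" "v (2*j + 1)"] v_odd_in_P assms by simp
  then have "j < i"
    using assms(2) by simp
  then show False
    using in_piece \<open>k = Suc j\<close> piece_subset_side v_odd_notin_side by blast
qed

lemma x_ne_v_odd: "j \<le> i \<Longrightarrow> k \<le> i \<Longrightarrow> x (2*k) \<noteq> v (2*j + 1)"
  using v_odd_notin_piece[of j k] x_in_piece[of k] by auto

lemma x_ne_v_last: "k \<le> i \<Longrightarrow> x (2*k) \<noteq> v (2*i + 2)"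
  using host_unique[of k "Suc i" "x (2*k)"] x_in_host[of k] v_even_in_P[of i] by auto

lemma x_eq_iff: "j \<le> i \<Longrightarrow> k \<le> i \<Longrightarrow> x (2*j) = x (2*k) \<longleftrightarrow> j = k"
  using host_unique[of j k "x (2*j)"] x_in_host[of j] x_in_host[of k] by auto

lemma v_odd_eq_iff: "j \<le> i \<Longrightarrow> k \<le> i \<Longrightarrow> v (2*j + 1) = v (2*k + 1) \<longleftrightarrow> j = k"
  using v_eq_iff by simp

lemma v_odd_ne_v_even: "j \<le> i \<Longrightarrow> k \<le> i \<Longrightarrow> v (2*j + 1) \<noteq> v (2*k + 2)"
proof -
  have "2*j + 1 \<noteq> 2*k + 2"
    by presburger
  then show "j \<le> i \<Longrightarrow> k \<le> i \<Longrightarrow> v (2*j + 1) \<noteq> v (2*k + 2)"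
    using v_eq_iff[of "2*j + 1" "2*k + 2"] by simp
qed

lemma inj_on_removed: "inj_on removed {..i}"
proof (rule inj_onI)
  fix j k
  assume jk: "j \<in> {..i}" "k \<in> {..i}" and "removed j = removed k"
  then have "v (2*j + 1) \<in> {v (2*k + 1), v (2*k + 2)}"
    unfolding removed_def by blast
  then show "j = k"
    using jk v_odd_eq_iff v_odd_ne_v_even by auto
qed

lemma inj_on_added: "inj_on added {..i}"
proof (rule inj_onI)
  fix j k
  assume jk: "j \<in> {..i}" "k \<in> {..i}" and "added j = added k"
  have "v (2*j + 1) \<in> added k"
    using \<open>added j = added k\<close> unfolding added_def by blast
  moreover have "v (2*j + 1) \<noteq> x (2*k)"
    using jk x_ne_v_odd[of j k] by simp
  ultimately have "v (2*j + 1) = v (2*k + 1)"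
    unfolding added_def by blast
  then show "j = k"
    using jk v_odd_eq_iff by simp
qed

lemma card_switched: "card switched = card M"
proof -
  have sub: "Removed \<subseteq> M" and disj: "Added \<inter> M = {}"
    using removed_in_M added_in_E_minus_M unfolding Removed_def Added_def by auto
  have "card Removed = card Added"
    unfolding Removed_def Added_def using inj_on_removed inj_on_added by (simp add: card_image)
  moreover have "card switched = card (M - Removed) + card Added"
    unfolding switched_def using finite_M disj Added_def by (intro card_Un_disjoint) auto
  moreover have "card (M - Removed) = card M - card Removed"
    using sub finite_M by (meson card_Diff_subset finite_subset)
  moreover have "card Removed \<le> card M"
    using card_mono[OF finite_M sub] .
  ultimately show ?thesis
    by linarith
qed

lemma switched_subset_E: "switched \<subseteq> E"
  using M_subset_E added_in_E_minus_M unfolding switched_def Added_def by auto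

lemma incident_Added:
  "incident Added w = added ` {k. k \<le> i \<and> (w = x (2*k) \<or> w = v (2*k + 1))}"
  unfolding Added_def added_def by auto

lemma incident_Added_x: "k \<le> i \<Longrightarrow> incident Added (x (2*k)) = {added k}"
proof -
  assume k: "k \<le> i"
  then have "{j. j \<le> i \<and> (x (2*k) = x (2*j) \<or> x (2*k) = v (2*j + 1))} = {k}"
    using x_eq_iff x_ne_v_odd by auto
  then show ?thesis
    unfolding incident_Added by simp
qed

lemma incident_Added_v_odd: "j \<le> i \<Longrightarrow> incident Added (v (2*j + 1)) = {added j}"
proof -
  assume j: "j \<le> i"
  then have "{k. k \<le> i \<and> (v (2*j + 1) = x (2*k) \<or> v (2*j + 1) = v (2*k + 1))} = {j}"
    using x_ne_v_odd v_odd_eq_iff by fastforce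
  then show ?thesis
    unfolding incident_Added by simp
qed

lemma card_incident_x: "k \<le> i \<Longrightarrow> card (incident (M - Removed) (x (2*k))) \<le> 1"
  using card_incident_le_1_if_small_comp[of "M - Removed" "x (2*k)"] card_piece
    loopless_subset[OF loopless_M]
  unfolding piece_def by blast

lemma card_incident_switched_x:
  assumes "k \<le> i"
  shows "card (incident switched (x (2*k))) \<le> 2"
proof -
  have "incident switched (x (2*k)) = incident (M - Removed) (x (2*k)) \<union> {added k}"
    using incident_Added_x[OF assms] unfolding switched_def by blast
  then show ?thesis
    using card_incident_x[OF assms] card_Un_le[of "incident (M - Removed) (x (2*k))" "{added k}"]
    by simp
qed

lemma card_incident_switched_v_odd:
  assumes "j \<le> i" "v (2*j + 1) \<in> V"
  shows "card (incident switched (v (2*j + 1))) \<le> 2"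
proof (rule card_le_2_exchange)
  show "finite (incident M (v (2*j + 1)))" "card (incident M (v (2*j + 1))) \<le> 2"
    using finite_M card_incident_M assms(2) by simp_all
  show "removed j \<in> incident M (v (2*j + 1))"
    using removed_in_M assms(1) unfolding removed_def by simp
  have "removed j \<in> Removed"
    using assms(1) unfolding Removed_def by simp
  then show "incident switched (v (2*j + 1))
      \<subseteq> insert (added j) (incident M (v (2*j + 1)) - {removed j})"
    using incident_Added_v_odd[OF assms(1)] unfolding switched_def by blast
qed

lemma incident_switched_other:
  assumes "\<forall>k\<le>i. w \<noteq> x (2*k) \<and> w \<noteq> v (2*k + 1)"
  shows "incident switched w \<subseteq> incident M w"
proof -
  have "incident Added w = {}"
    using assms unfolding incident_Added by auto
  then show ?thesis
    unfolding switched_def by blast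
qed

lemma switched_two_matching: "two_matching V E switched"
  unfolding two_matching_def
proof (intro conjI ballI)
  show "switched \<subseteq> E"
    by (rule switched_subset_E)
  fix w
  assume w: "w \<in> V"
  show "card (incident switched w) \<le> 2"
  proof (cases "\<exists>k\<le>i. w = x (2*k) \<or> w = v (2*k + 1)")
    case True
    then show ?thesis
      using card_incident_switched_x card_incident_switched_v_odd w by blast
  next
    case False
    then have "card (incident switched w) \<le> card (incident M w)"
      using incident_switched_other finite_M by (intro card_mono) auto
    then show ?thesis
      using card_incident_M[OF w] by simp
  qed
qed

lemma switched_maximum: "max_two_matching V E switched"
  using switched_two_matching maximum card_switched unfolding max_two_matching_def by simp

lemma incident_remaining_at_end:
  assumes Q_end: "\<forall>u. {v (2*i + 1), u} \<in> M \<longrightarrow> u = v (2*i + 2)"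
  shows "incident (M - Removed) (v (2*i + 1)) = {}"
proof -
  have "e \<notin> M - Removed" if e: "e \<in> M" "v (2*i + 1) \<in> e" for e
  proof -
    obtain u where u: "e = {v (2*i + 1), u}"
      using loopless_edge_at[OF loopless_M e] by blast
    then have "e = removed i"
      using Q_end e(1) by (simp add: removed_def)
    then show ?thesis
      unfolding Removed_def by auto
  qed
  then show ?thesis
    by blast
qed

text \<open>If v(2i+1) were an end of Q, putting the edge v(2i+1)v(2i+2) back would give a
  2-matching larger than M.\<close>
lemma two_matching_insert_removed_last:
  assumes Q_end: "\<forall>u. {v (2*i + 1), u} \<in> M \<longrightarrow> u = v (2*i + 2)"
  shows "two_matching V E (insert (removed i) switched)"
  unfolding two_matching_def
proof (intro conjI ballI)
  show "insert (removed i) switched \<subseteq> E"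
    using switched_subset_E removed_in_M M_subset_E by auto
  fix w
  assume w: "w \<in> V"
  consider "w = v (2*i + 1)" | "w = v (2*i + 2)" | "w \<notin> removed i"
    unfolding removed_def by blast
  then show "card (incident (insert (removed i) switched) w) \<le> 2"
  proof cases
    case 1
    then have "incident (insert (removed i) switched) w \<subseteq> {removed i, added i}"
      using incident_remaining_at_end[OF Q_end] incident_Added_v_odd[of i]
      unfolding switched_def by auto
    moreover have "card {removed i, added i} \<le> 2"
      by (simp add: card_insert_if)
    ultimately show ?thesis
      by (meson card_mono finite.emptyI finite.insertI order_trans)
  next
    case 2
    have "\<forall>k\<le>i. w \<noteq> x (2*k) \<and> w \<noteq> v (2*k + 1)"
    proof (intro allI impI conjI)
      fix k
      assume "k \<le> i"
      then show "w \<noteq> x (2*k)" "w \<noteq> v (2*k + 1)"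
        using 2 x_ne_v_last[of k] v_odd_ne_v_even[of k i] by auto
    qed
    then have "incident (insert (removed i) switched) w \<subseteq> incident M w"
      using incident_switched_other removed_in_M by blast
    moreover have "finite (incident M w)"
      using finite_M by simp
    ultimately show ?thesis
      using card_incident_M[OF w] by (meson card_mono order_trans)
  next
    case 3
    then have "incident (insert (removed i) switched) w = incident switched w"
      by blast
    then show ?thesis
      using switched_two_matching w unfolding two_matching_def by simp
  qed
qed

lemma v_odd_other_neighbour:
  assumes "j \<le> i"
  obtains u where "{v (2*j + 1), u} \<in> M" "u \<noteq> v (2*j + 2)"
proof (cases "j = i")
  case True
  have "\<exists>u. {v (2*i + 1), u} \<in> M \<and> u \<noteq> v (2*i + 2)"
  proof (rule ccontr)
    assume "\<not> ?thesis"
    then have "two_matching V E (insert (removed i) switched)"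
      using two_matching_insert_removed_last by blast
    moreover have "removed i \<notin> Added"
      using removed_in_M[of i] added_in_E_minus_M unfolding Added_def by force
    then have "removed i \<notin> switched"
      unfolding switched_def Removed_def by simp
    ultimately have "card (insert (removed i) switched) \<le> card switched"
      using maximum card_switched unfolding max_two_matching_def by simp
    moreover have "finite switched"
      unfolding switched_def Added_def using finite_M by simp
    ultimately show False
      using \<open>removed i \<notin> switched\<close> by simp
  qed
  then show thesis
    using that True by blast
next
  case False
  then have "j < i"
    using assms by simp
  then obtain a b where "a \<noteq> b" "{v (2*j + 1), a} \<in> M" "{v (2*j + 1), b} \<in> M"
    using internal_vertex_two_neighbours[OF v_odd_internal] by blast
  then show thesis
    using that by blast
qed

lemma removed_subset_P:
  assumes "j \<le> i" "k \<le> i" "removed k \<subseteq> P j"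
  shows "k = j"
proof -
  have "v (2*k + 1) \<in> host (Suc j)" "v (2*k + 1) \<in> host (Suc k)"
    using assms(3) v_odd_in_P unfolding removed_def by auto
  then show ?thesis
    using host_unique[of "Suc k" "Suc j" "v (2*k + 1)"] assms(1,2) by simp
qed

lemma comp_minus_removed_subset_switched:
  assumes "j \<le> i" "u \<in> P j"
  shows "comp (M - {removed j}) u \<subseteq> comp switched u"
proof -
  have "comp (M - {removed j}) u \<subseteq> P j \<inter> comp switched u"
  proof (rule comp_mono_on)
    fix a b
    assume a: "a \<in> P j" and ab: "{a, b} \<in> M - {removed j}"
    have b: "b \<in> P j"
      using comp_edge_closed[of a M "v (2*j + 1)" b] a ab unfolding P_def by blast
    have "{a, b} \<notin> Removed"
    proof
      assume "{a, b} \<in> Removed"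
      then obtain k where k: "k \<le> i" "{a, b} = removed k"
        unfolding Removed_def by auto
      then have "removed k \<subseteq> P j"
        using a b by auto
      then have "k = j"
        using removed_subset_P[OF assms(1) k(1)] by simp
      then show False
        using ab k(2) by simp
    qed
    then show "b \<in> P j \<and> {a, b} \<in> switched"
      using b ab unfolding switched_def by blast
  qed (rule assms(2))
  then show ?thesis
    by blast
qed

lemma finite_comp_switched: "finite (comp switched z)"
  using finite_comp_of_subgraph switched_subset_E by blast

lemma card_comp_switched_x:
  assumes "j \<le> i"
  shows "3 \<le> card (comp switched (x (2*j)))"
proof -
  obtain u where u: "{v (2*j + 1), u} \<in> M" "u \<noteq> v (2*j + 2)"
    using v_odd_other_neighbour[OF assms] .
  have "{v (2*j + 1), u} \<notin> Removed"
  proof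
    assume "{v (2*j + 1), u} \<in> Removed"
    then obtain k where k: "k \<le> i" "{v (2*j + 1), u} = removed k"
      unfolding Removed_def by auto
    then have "v (2*j + 1) \<in> {v (2*k + 1), v (2*k + 2)}"
      unfolding removed_def by (metis insertI1)
    then have "k = j"
      using k(1) assms v_odd_eq_iff v_odd_ne_v_even by auto
    then show False
      using k(2) u(2) unfolding removed_def by (auto simp: doubleton_eq_iff)
  qed
  then have edges: "added j \<in> switched" "{v (2*j + 1), u} \<in> switched"
    using assms u(1) unfolding switched_def Added_def by auto
  have x: "x (2*j) \<in> comp switched (x (2*j))"
    by (rule self_in_comp)
  have v: "v (2*j + 1) \<in> comp switched (x (2*j))"
    using comp_edge_closed[OF x, of "v (2*j + 1)"] edges(1) unfolding added_def by simp
  have "u \<in> comp switched (x (2*j))"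
    by (rule comp_edge_closed[OF v edges(2)])
  then have "{x (2*j), v (2*j + 1), u} \<subseteq> comp switched (x (2*j))"
    using x v by simp
  moreover have "x (2*j) \<noteq> v (2*j + 1)"
    using x_ne_v_odd assms by blast
  moreover have "v (2*j + 1) \<noteq> u"
    using loopless_edge_ne[OF loopless_M u(1)] .
  moreover have "x (2*j) \<noteq> u"
    using added_in_E_minus_M[OF assms] u(1) unfolding added_def by (auto simp: insert_commute)
  ultimately show ?thesis
    by (rule three_le_card[OF finite_comp_switched])
qed

lemma comp_switched_v_odd: "j \<le> i \<Longrightarrow> comp switched (v (2*j + 1)) = comp switched (x (2*j))"
proof -
  assume j: "j \<le> i"
  have "added j \<in> switched"
    using j unfolding switched_def Added_def by auto
  then have "v (2*j + 1) \<in> comp switched (x (2*j))"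
    using comp_edge_closed[OF self_in_comp, of "x (2*j)" "v (2*j + 1)"] unfolding added_def by simp
  then show ?thesis
    by (rule comp_eq_if_mem)
qed

lemma comp_switched_v_even:
  assumes "j < i"
  shows "comp switched (v (2*j + 2)) = comp switched (x (2 * Suc j))"
proof -
  have "v (2*j + 2) \<in> P j"
    using assms v_even_in_P by simp
  then have "x (2*j + 2) \<in> comp switched (v (2*j + 2))"
    using comp_minus_removed_subset_switched[of j] x_in_side[OF assms] assms by auto
  then have "comp switched (x (2*j + 2)) = comp switched (v (2*j + 2))"
    by (rule comp_eq_if_mem)
  then show ?thesis
    by simp
qed

lemma card_side_last: "3 \<le> card (comp (M - {removed i}) (v (2*i + 2)))"
proof (cases "is_path M (P i)")
  case True
  then show ?thesis
    by (rule Q_side_if_path)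
next
  case False
  then have cycle: "is_cycle M (P i)"
    using Q_shape unfolding is_path_def by blast
  have v_in: "v (2*i + 2) \<in> P i"
    using v_even_in_P by simp
  obtain a b where "a \<noteq> b" "{v (2*i + 2), a} \<in> M" "{v (2*i + 2), b} \<in> M"
    by (rule cycle_vertex_two_neighbours[OF cycle v_in])
  then obtain u where u: "{v (2*i + 2), u} \<in> M" "u \<noteq> v (2*i + 1)"
    by blast
  have u_in: "u \<in> P i"
    using comp_edge_closed[of "v (2*i + 2)" M "v (2*i + 1)" u] u(1) v_in unfolding P_def by blast
  obtain a' b' where "a' \<noteq> b'" "{u, a'} \<in> M" "{u, b'} \<in> M"
    by (rule cycle_vertex_two_neighbours[OF cycle u_in])
  then obtain u' where u': "{u, u'} \<in> M" "u' \<noteq> v (2*i + 2)"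
    by blast
  have ne: "u \<noteq> v (2*i + 2)" "u \<noteq> u'"
    using loopless_edge_ne[OF loopless_M] u(1) u'(1) by blast+
  have e1: "{v (2*i + 2), u} \<in> M - {removed i}"
    using u ne unfolding removed_def by (auto simp: doubleton_eq_iff)
  have e2: "{u, u'} \<in> M - {removed i}"
    using u' ne unfolding removed_def by (auto simp: doubleton_eq_iff)
  have "v (2*i + 2) \<in> comp (M - {removed i}) (v (2*i + 2))"
    by (rule self_in_comp)
  moreover have "u \<in> comp (M - {removed i}) (v (2*i + 2))"
    by (rule comp_edge_closed[OF calculation e1])
  moreover have "u' \<in> comp (M - {removed i}) (v (2*i + 2))"
    by (rule comp_edge_closed[OF calculation(2) e2])
  ultimately have sub: "{v (2*i + 2), u, u'} \<subseteq> comp (M - {removed i}) (v (2*i + 2))"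
    by simp
  have fin: "finite (comp (M - {removed i}) (v (2*i + 2)))"
    using M_subset_E by (intro finite_comp_of_subgraph) auto
  show ?thesis
    by (rule three_le_card[OF fin sub]) (use ne u'(2) in auto)
qed

lemma card_comp_switched_v_last: "3 \<le> card (comp switched (v (2*i + 2)))"
proof -
  have "comp (M - {removed i}) (v (2*i + 2)) \<subseteq> comp switched (v (2*i + 2))"
    using comp_minus_removed_subset_switched[of i] v_even_in_P by simp
  then show ?thesis
    using card_side_last card_mono[OF finite_comp_switched] order_trans by blast
qed

lemma Touched_cases:
  assumes "t \<in> Touched"
  obtains j where "j \<le> i" "t = x (2*j) \<or> t = v (2*j + 1) \<or> t = v (2*j + 2)"
  using assms unfolding Touched_def Removed_def Added_def removed_def added_def by auto

lemma card_comp_switched_Touched: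
  assumes "t \<in> Touched"
  shows "3 \<le> card (comp switched t)"
proof -
  obtain j where j: "j \<le> i" "t = x (2*j) \<or> t = v (2*j + 1) \<or> t = v (2*j + 2)"
    using Touched_cases[OF assms] .
  consider "t = x (2*j) \<or> t = v (2*j + 1)" | "t = v (2*j + 2)" "j < i" | "t = v (2*i + 2)"
    using j by fastforce
  then show ?thesis
  proof cases
    case 1
    then show ?thesis
      using card_comp_switched_x[OF j(1)] comp_switched_v_odd[OF j(1)] by auto
  next
    case 2
    then show ?thesis
      using card_comp_switched_x[of "Suc j"] comp_switched_v_even by simp
  next
    case 3
    then show ?thesis
      using card_comp_switched_v_last by simp
  qed
qed

lemma Touched_in_host:
  assumes "t \<in> Touched"
  obtains k where "k \<le> Suc i" "t \<in> host k"
proof -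
  obtain j where j: "j \<le> i" "t = x (2*j) \<or> t = v (2*j + 1) \<or> t = v (2*j + 2)"
    using Touched_cases[OF assms] .
  then show thesis
    using that[of j] that[of "Suc j"] x_in_host v_odd_in_P v_even_in_P by auto
qed

lemma comp_M_Touched: "t \<in> Touched \<Longrightarrow> comp M t = O0 \<or> 3 \<le> card (comp M t)"
proof -
  assume "t \<in> Touched"
  then obtain k where k: "k \<le> Suc i" "t \<in> host k"
    by (rule Touched_in_host)
  then show ?thesis
    using host_is_comp[OF k(2)] card_P by (cases k) auto
qed

lemma v0_in_Touched: "v 0 \<in> Touched"
proof -
  have "added 0 \<in> Added"
    unfolding Added_def by simp
  then show ?thesis
    using x0_eq unfolding Touched_def added_def by auto
qed

lemma switched_agrees_outside: "e \<notin> Removed \<union> Added \<Longrightarrow> e \<in> M \<longleftrightarrow> e \<in> switched"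
  unfolding switched_def by blast

lemma comp_switched_eq_if_untouched:
  "comp M w \<inter> Touched = {} \<Longrightarrow> comp switched w = comp M w"
  using comp_eq_if_agree[of "Removed \<union> Added" M switched w] switched_agrees_outside
  unfolding Touched_def by blast

lemma comp_M_eq_if_untouched:
  "comp switched w \<inter> Touched = {} \<Longrightarrow> comp M w = comp switched w"
  using comp_eq_if_agree[of "Removed \<union> Added" switched M w] switched_agrees_outside
  unfolding Touched_def by blast

lemma small_comp_switched_untouched:
  assumes "card (comp switched w) \<le> 2"
  shows "comp switched w \<inter> Touched = {}"
proof (rule ccontr)
  assume "comp switched w \<inter> Touched \<noteq> {}"
  then obtain t where t: "t \<in> comp switched w" "t \<in> Touched"
    by blast
  then have "comp switched t = comp switched w"
    by (simp add: comp_eq_if_mem)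
  then show False
    using card_comp_switched_Touched[OF t(2)] assms by simp
qed

lemma small_comp_M_untouched:
  assumes "card (comp M w) \<le> 2" "comp M w \<noteq> O0"
  shows "comp M w \<inter> Touched = {}"
proof (rule ccontr)
  assume "comp M w \<inter> Touched \<noteq> {}"
  then obtain t where t: "t \<in> comp M w" "t \<in> Touched"
    by blast
  then have "comp M t = comp M w"
    by (simp add: comp_eq_if_mem)
  then show False
    using comp_M_Touched[OF t(2)] assms by simp
qed

lemma objects_switched: "objects V switched = objects V M - {O0}"
proof (intro set_eqI iffI)
  fix C
  assume "C \<in> objects V switched"
  then obtain w where w: "w \<in> V" "C = comp switched w" "card C \<le> 2"
    using objects_eq_small_comps[OF graph switched_subset_E] unfolding comps_def by auto
  then have "C = comp M w" "C \<noteq> O0"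
    using small_comp_switched_untouched comp_M_eq_if_untouched v0_in_Touched v0_in_O0 by auto
  then show "C \<in> objects V M - {O0}"
    using w objects_eq_small_comps[OF graph M_subset_E] unfolding comps_def by auto
next
  fix C
  assume "C \<in> objects V M - {O0}"
  then obtain w where w: "w \<in> V" "C = comp M w" "card C \<le> 2" "C \<noteq> O0"
    using objects_eq_small_comps[OF graph M_subset_E] unfolding comps_def by auto
  then have "C = comp switched w"
    using small_comp_M_untouched comp_switched_eq_if_untouched by auto
  then show "C \<in> objects V switched"
    using w objects_eq_small_comps[OF graph switched_subset_E] unfolding comps_def by auto
qed

lemma card_objects_switched: "card (objects V switched) + 1 = card (objects V M)"
proof -
  have "finite (objects V M)"
    using finite_V unfolding objects_def comps_def by simp
  then have "card (objects V M - {O0}) = card (objects V M) - 1" "card (objects V M) \<noteq> 0"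
    using O0_object by (auto simp: card_0_eq)
  then show ?thesis
    using objects_switched by simp
qed

end

theorem mainTheorem6:
  fixes V :: "'a set" and E M :: "'a set set" and O0 :: "'a set"
    and i :: nat and v x :: "nat \<Rightarrow> 'a"
  assumes "simple_graph V E"
    and "max_two_matching V E M"
    and "B_alternating_path V E M O0 i v x"
  defines "M' \<equiv> (M - {{v (2*j + 1), v (2*j + 2)} | j. j \<le> i})
                 \<union> {{x (2*j), v (2*j + 1)} | j. j \<le> i}"
  shows "max_two_matching V E M' \<and> card (objects V M') + 1 = card (objects V M)"
proof -
  interpret B_alternating_switch V E M O0 i v x
    using assms(1-3) by unfold_locales
  have "M' = switched"
    unfolding M'_def switched_def Removed_def Added_def removed_def added_def by auto
  then show ?thesis
    using switched_maximum card_objects_switched by simp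
qed

end
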